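(* Let $\mathcal{A}=\langle Q,\Sigma,\delta\rangle$ be an $n$-state DFA whose transition monoid is $T_n$, let $x\in\Sigma$ be a fixed letter of rank $n-1$, and let $k\ge 0$. If the digraph $\Gamma_k$ is strongly connected, then every proper non-empty subset $R\subset Q$ can be extended by some word of length at most $k+1$.
   Context: Words act on states letter by letter from left to right. The transition monoid is the monoid of transformations of $Q$ generated by the letters; $T_n$ is the monoid of all self-maps of an $n$-element set. A letter has rank $n-1$ if $|Q\cdot x|=n-1$. For such $x$, $\mathrm{excl}(x)$ is the unique state in $Q\setminus Q\cdot x$, and $\mathrm{dupl}(x)$ is the unique state $p$ with $p=q_1\cdot x=q_2\cdot x$ for some $q_1\ne q_2$. For a proper non-empty $R\subset Q$ and a word $w$, $R$ can be extended by $w$ if $|Rw^{-1}|>|R|$, where $Rw^{-1}=\{q\in Q\mid q\cdot w\in R\}$. Let $\Pi\subseteq\Sigma$ be the set of letters acting as permutations of $Q$, and $\Pi^i$ the set of words of length at most $i$ over $\Pi$ (including the empty word). $\Gamma_i$ is the digraph with vertex set $Q$ and edge set $E_i=\{(\mathrm{excl}(x)\cdot w,\ \mathrm{dupl}(x)\cdot w)\mid w\in\Pi^i\}$. *)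

theory Defs
  imports Main
begin

definition is_dfa :: "'q set \<Rightarrow> 'a set \<Rightarrow> ('q \<Rightarrow> 'a \<Rightarrow> 'q) \<Rightarrow> bool" where
  "is_dfa Q Sg delta \<longleftrightarrow> finite Q \<and> Q \<noteq> {} \<and> finite Sg \<and>
     (\<forall>q\<in>Q. \<forall>a\<in>Sg. delta q a \<in> Q)"

definition act :: "('q \<Rightarrow> 'a \<Rightarrow> 'q) \<Rightarrow> 'q \<Rightarrow> 'a list \<Rightarrow> 'q" where
  "act delta q w = foldl delta q w"

definition full_transition_monoid :: "'q set \<Rightarrow> 'a set \<Rightarrow> ('q \<Rightarrow> 'a \<Rightarrow> 'q) \<Rightarrow> bool" where
  "full_transition_monoid Q Sg delta \<longleftrightarrow>
     (\<forall>f. (\<forall>q\<in>Q. f q \<in> Q) \<longrightarrow> (\<exists>w. set w \<subseteq> Sg \<and> (\<forall>q\<in>Q. act delta q w = f q)))"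

definition letter_rank :: "'q set \<Rightarrow> ('q \<Rightarrow> 'a \<Rightarrow> 'q) \<Rightarrow> 'a \<Rightarrow> nat" where
  "letter_rank Q delta x = card ((\<lambda>q. delta q x) ` Q)"

definition excl :: "'q set \<Rightarrow> ('q \<Rightarrow> 'a \<Rightarrow> 'q) \<Rightarrow> 'a \<Rightarrow> 'q" where
  "excl Q delta x = (THE p. p \<in> Q - (\<lambda>q. delta q x) ` Q)"

definition dupl :: "'q set \<Rightarrow> ('q \<Rightarrow> 'a \<Rightarrow> 'q) \<Rightarrow> 'a \<Rightarrow> 'q" where
  "dupl Q delta x = (THE p. \<exists>q1\<in>Q. \<exists>q2\<in>Q. q1 \<noteq> q2 \<and> delta q1 x = p \<and> delta q2 x = p)"

definition perm_letters :: "'q set \<Rightarrow> 'a set \<Rightarrow> ('q \<Rightarrow> 'a \<Rightarrow> 'q) \<Rightarrow> 'a set" where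
  "perm_letters Q Sg delta = {a \<in> Sg. bij_betw (\<lambda>q. delta q a) Q Q}"

definition gamma_edges :: "'q set \<Rightarrow> 'a set \<Rightarrow> ('q \<Rightarrow> 'a \<Rightarrow> 'q) \<Rightarrow> 'a \<Rightarrow> nat \<Rightarrow> ('q \<times> 'q) set" where
  "gamma_edges Q Sg delta x i =
     {(act delta (excl Q delta x) w, act delta (dupl Q delta x) w) | w.
        set w \<subseteq> perm_letters Q Sg delta \<and> length w \<le> i}"

definition strongly_connected_on :: "'q set \<Rightarrow> ('q \<times> 'q) set \<Rightarrow> bool" where
  "strongly_connected_on V E \<longleftrightarrow> (\<forall>p\<in>V. \<forall>q\<in>V. (p, q) \<in> (E \<inter> (V \<times> V))\<^sup>*)"

definition preimage_word :: "'q set \<Rightarrow> ('q \<Rightarrow> 'a \<Rightarrow> 'q) \<Rightarrow> 'q set \<Rightarrow> 'a list \<Rightarrow> 'q set" where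
  "preimage_word Q delta R w = {q \<in> Q. act delta q w \<in> R}"

definition can_be_extended :: "'q set \<Rightarrow> ('q \<Rightarrow> 'a \<Rightarrow> 'q) \<Rightarrow> 'q set \<Rightarrow> 'a list \<Rightarrow> bool" where
  "can_be_extended Q delta R w \<longleftrightarrow> card (preimage_word Q delta R w) > card R"

end

theory Submission
  imports Defs
begin

text \<open>Extend \<open>R\<close> by the word \<open>x w\<close>, where \<open>w\<close> is a product of permutation
  letters taken from an edge of \<open>\<Gamma>\<^sub>k\<close> that leaves \<open>R\<close>, i.e. with
  \<open>excl(x)\<cdot>w \<notin> R\<close> and \<open>dupl(x)\<cdot>w \<in> R\<close>; such an edge exists by strong
  connectivity. The preimage \<open>T = R w\<^sup>-\<^sup>1\<close> has the size of \<open>R\<close>, avoids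
  \<open>excl(x)\<close> and contains \<open>dupl(x)\<close>. Hence \<open>x\<close> maps \<open>T x\<^sup>-\<^sup>1\<close>
  onto \<open>T\<close> and identifies two of its states, so \<open>|R (x w)\<^sup>-\<^sup>1| = |T x\<^sup>-\<^sup>1| > |T| = |R|\<close>.\<close>

lemma act_Cons: "act delta q (a # w) = act delta (delta q a) w"
  by (simp add: act_def)

lemma bij_betw_act_perm_letters:
  "set w \<subseteq> perm_letters Q Sg delta \<Longrightarrow> bij_betw (\<lambda>q. act delta q w) Q Q"
proof (induction w)
  case Nil
  then show ?case by (simp add: act_def bij_betw_id[unfolded id_def])
next
  case (Cons a w)
  then have "bij_betw (\<lambda>q. delta q a) Q Q" and "bij_betw (\<lambda>q. act delta q w) Q Q"
    by (auto simp: perm_letters_def)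
  then have "bij_betw ((\<lambda>q. act delta q w) \<circ> (\<lambda>q. delta q a)) Q Q"
    by (rule bij_betw_trans)
  then show ?case by (simp add: act_Cons o_def)
qed

lemma rtrancl_leaving_edge:
  assumes "(p, q) \<in> E\<^sup>*" "p \<notin> R" "q \<in> R"
  shows "\<exists>u v. (u, v) \<in> E \<and> u \<notin> R \<and> v \<in> R"
  using assms
proof (induction rule: rtrancl_induct)
  case base
  then show ?case by simp
next
  case (step y z)
  then show ?case by (cases "y \<in> R") auto
qed

lemma card_preimage_bij_betw:
  assumes "bij_betw g Q Q" "R \<subseteq> Q"
  shows "card {q \<in> Q. g q \<in> R} = card R"
proof -
  have "R \<subseteq> g ` Q"
    using assms by (simp add: bij_betw_imp_surj_on)
  then have "g ` {q \<in> Q. g q \<in> R} = R" by auto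
  then have "bij_betw g {q \<in> Q. g q \<in> R} R"
    using bij_betw_subset[OF assms(1)] by auto
  then show ?thesis by (rule bij_betw_same_card)
qed

lemma rank_pred_missing_singleton:
  assumes "finite Q" "Q \<noteq> {}" "f ` Q \<subseteq> Q" "card (f ` Q) = card Q - 1"
  shows "\<exists>e. Q - f ` Q = {e}"
proof -
  have "card Q > 0" using assms(1,2) by auto
  then have "card (Q - f ` Q) = 1"
    using assms card_Diff_subset[OF finite_imageI[OF assms(1)] assms(3)] by simp
  then show ?thesis by (rule card_1_singletonE) blast
qed

lemma rank_pred_not_inj_on:
  assumes "finite Q" "Q \<noteq> {}" "card (f ` Q) = card Q - 1"
  shows "\<not> inj_on f Q"
proof -
  have "card Q > 0" using assms(1,2) by auto
  then show ?thesis using assms(3) inj_on_iff_eq_card[OF assms(1), of f] by simp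
qed

text \<open>Two distinct collision values would let us drop one state from each collision
  without shrinking the image, forcing rank at most \<open>n - 2\<close>.\<close>
lemma rank_pred_collision_unique:
  assumes "finite Q" "card (f ` Q) = card Q - 1"
    and "q1 \<in> Q" "q2 \<in> Q" "q1 \<noteq> q2" "f q1 = f q2"
    and "r1 \<in> Q" "r2 \<in> Q" "r1 \<noteq> r2" "f r1 = f r2"
  shows "f q1 = f r1"
proof (rule ccontr)
  assume ne: "f q1 \<noteq> f r1"
  have "f ` Q \<subseteq> f ` (Q - {q1, r1})"
  proof
    fix b assume "b \<in> f ` Q"
    then obtain q where q: "q \<in> Q" "b = f q" by blast
    have "q2 \<in> Q - {q1, r1}" "r2 \<in> Q - {q1, r1}"
      using assms ne by auto
    then show "b \<in> f ` (Q - {q1, r1})"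
      using assms(6,10) q by (cases "q = q1 \<or> q = r1") auto
  qed
  then have "card (f ` Q) \<le> card (Q - {q1, r1})"
    using assms(1) by (meson card_image_le card_mono finite_Diff finite_imageI le_trans)
  also have "\<dots> = card Q - 2"
    using assms ne by (subst card_Diff_subset) (auto simp: card_insert_if)
  finally show False
    using assms card_mono[OF assms(1), of "{q1, q2}"] by simp
qed

lemma excl_eq_missing:
  assumes "is_dfa Q Sg delta" "x \<in> Sg" "letter_rank Q delta x = card Q - 1"
  shows "Q - (\<lambda>q. delta q x) ` Q = {excl Q delta x}"
proof -
  obtain e where "Q - (\<lambda>q. delta q x) ` Q = {e}"
    using assms rank_pred_missing_singleton[of Q "\<lambda>q. delta q x"]
    by (auto simp: is_dfa_def letter_rank_def)
  moreover from this have "excl Q delta x = e"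
    by (auto simp: excl_def)
  ultimately show ?thesis by simp
qed

lemma dupl_collision:
  assumes "is_dfa Q Sg delta" "letter_rank Q delta x = card Q - 1"
  obtains q1 q2 where "q1 \<in> Q" "q2 \<in> Q" "q1 \<noteq> q2"
    "delta q1 x = dupl Q delta x" "delta q2 x = dupl Q delta x"
proof -
  have fin: "finite Q" "Q \<noteq> {}" using assms(1) by (auto simp: is_dfa_def)
  let ?f = "\<lambda>q. delta q x"
  have rk: "card (?f ` Q) = card Q - 1" using assms(2) by (simp add: letter_rank_def)
  obtain q1 q2 where q: "q1 \<in> Q" "q2 \<in> Q" "q1 \<noteq> q2" "?f q1 = ?f q2"
    using rank_pred_not_inj_on[OF fin rk] by (auto simp: inj_on_def)
  have "dupl Q delta x = ?f q1"
    unfolding dupl_def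
  proof (rule the_equality)
    show "\<exists>r1\<in>Q. \<exists>r2\<in>Q. r1 \<noteq> r2 \<and> ?f r1 = ?f q1 \<and> ?f r2 = ?f q1"
      using q by metis
  next
    fix d assume "\<exists>r1\<in>Q. \<exists>r2\<in>Q. r1 \<noteq> r2 \<and> ?f r1 = d \<and> ?f r2 = d"
    then show "d = ?f q1"
      using rank_pred_collision_unique[OF fin(1) rk q] by metis
  qed
  with q that show ?thesis by simp
qed

lemma card_preimage_gt:
  assumes "finite Q" "T \<subseteq> Q" "Q - f ` Q = {e}" "e \<notin> T"
    and "q1 \<in> Q" "q2 \<in> Q" "q1 \<noteq> q2" "f q1 = f q2" "f q1 \<in> T"
  shows "card T < card {q \<in> Q. f q \<in> T}"
proof -
  let ?P = "{q \<in> Q. f q \<in> T}"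
  have "T \<subseteq> f ` Q" using assms(2-4) by auto
  then have "f ` ?P = T" by auto
  moreover have "\<not> inj_on f ?P" using assms(5-9) by (auto simp: inj_on_def)
  moreover have "finite ?P" using assms(1) by simp
  ultimately have "card T \<le> card ?P" "card T \<noteq> card ?P"
    using card_image_le inj_on_iff_eq_card by metis+
  then show ?thesis by simp
qed

lemma preimage_word_Cons:
  assumes "\<forall>q\<in>Q. delta q a \<in> Q"
  shows "preimage_word Q delta R (a # w) = {q \<in> Q. delta q a \<in> preimage_word Q delta R w}"
  using assms by (auto simp: preimage_word_def act_Cons)

lemma can_be_extended_rank_pred_Cons:
  assumes dfa: "is_dfa Q Sg delta" and "x \<in> Sg" and rk: "letter_rank Q delta x = card Q - 1"
    and R: "R \<subseteq> Q" and w: "set w \<subseteq> perm_letters Q Sg delta"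
    and "act delta (excl Q delta x) w \<notin> R" "act delta (dupl Q delta x) w \<in> R"
  shows "can_be_extended Q delta R (x # w)"
proof -
  let ?T = "preimage_word Q delta R w"
  have fin: "finite Q" and xQ: "\<forall>q\<in>Q. delta q x \<in> Q"
    using dfa \<open>x \<in> Sg\<close> by (auto simp: is_dfa_def)
  have cT: "card ?T = card R"
    using card_preimage_bij_betw[OF bij_betw_act_perm_letters[OF w] R]
    by (simp add: preimage_word_def)
  obtain q1 q2 where q: "q1 \<in> Q" "q2 \<in> Q" "q1 \<noteq> q2"
    "delta q1 x = dupl Q delta x" "delta q2 x = dupl Q delta x"
    using dupl_collision[OF dfa rk] .
  have "card ?T < card {q \<in> Q. delta q x \<in> ?T}"
  proof (rule card_preimage_gt[OF fin _ excl_eq_missing[OF dfa \<open>x \<in> Sg\<close> rk] _ q(1-3)])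
    show "?T \<subseteq> Q" by (auto simp: preimage_word_def)
    show "excl Q delta x \<notin> ?T" using assms by (simp add: preimage_word_def)
    show "delta q1 x = delta q2 x" using q by simp
    show "delta q1 x \<in> ?T" using assms q xQ by (auto simp: preimage_word_def)
  qed
  then show ?thesis
    by (simp add: can_be_extended_def preimage_word_Cons[of Q delta x, OF xQ] cT)
qed

theorem lemma1:
  fixes Q :: "'q set" and Sg :: "'a set" and delta :: "'q \<Rightarrow> 'a \<Rightarrow> 'q"
    and x :: 'a and k :: nat
  assumes "is_dfa Q Sg delta"
    and "full_transition_monoid Q Sg delta"
    and "x \<in> Sg"
    and "letter_rank Q delta x = card Q - 1"
    and "strongly_connected_on Q (gamma_edges Q Sg delta x k)"
  shows "\<forall>R. R \<subset> Q \<and> R \<noteq> {} \<longrightarrow>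
           (\<exists>w. set w \<subseteq> Sg \<and> length w \<le> k + 1 \<and> can_be_extended Q delta R w)"
proof (intro allI impI)
  fix R assume R: "R \<subset> Q \<and> R \<noteq> {}"
  then obtain p q where "p \<in> Q" "p \<notin> R" "q \<in> R" "q \<in> Q" by blast
  then have "(p, q) \<in> (gamma_edges Q Sg delta x k \<inter> Q \<times> Q)\<^sup>*"
    using assms(5) by (simp add: strongly_connected_on_def)
  then obtain u v where "(u, v) \<in> gamma_edges Q Sg delta x k" "u \<notin> R" "v \<in> R"
    using rtrancl_leaving_edge[OF _ \<open>p \<notin> R\<close> \<open>q \<in> R\<close>] by blast
  then obtain w where w: "set w \<subseteq> perm_letters Q Sg delta" "length w \<le> k"
    and "act delta (excl Q delta x) w \<notin> R" "act delta (dupl Q delta x) w \<in> R"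
    by (auto simp: gamma_edges_def)
  then have "can_be_extended Q delta R (x # w)"
    using can_be_extended_rank_pred_Cons[OF assms(1,3,4)] R by blast
  moreover have "set (x # w) \<subseteq> Sg"
    using w(1) assms(3) by (auto simp: perm_letters_def)
  ultimately show "\<exists>w. set w \<subseteq> Sg \<and> length w \<le> k + 1 \<and> can_be_extended Q delta R w"
    using w(2) by (metis Suc_eq_plus1 Suc_le_mono length_Cons)
qed

end
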